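(* Let $G$ be a finite group and $\mathcal{P}$ a prime ideal of $\mathrm{Gh}(\underline{A}_G)$ with $\mathcal{P}(G/e)=(p)\subseteq\mathbb{Z}$, where $p$ is a prime or $0$. For $I\le G$ let $p_I\ge0$ be the integer with $\mathcal{P}(G/G)=\widetilde{A}(G)\cap\prod_{I\le G}p_I\mathbb{Z}$. Then $\mathscr{F}(\mathcal{P})=\{I\le G: p_I\ne1\}$ is a nonempty family of subgroups of $G$.
   Context: A family of subgroups of $G$ is a nonempty set of subgroups closed under conjugation and passing to subgroups. For $H\le G$, $\widetilde{A}(H)$ is the subring of $\prod_{I\le H}\mathbb{Z}$ of tuples $(a_I)_{I\le H}$ with $a_{hIh^{-1}}=a_I$ for $h\in H$ (so $\widetilde{A}(e)=\mathbb{Z}$). $\mathrm{Gh}(\underline{A}_G)$ is the $G$-Tambara functor with $\mathrm{Gh}(\underline{A}_G)(G/H)=\widetilde{A}(H)$ and, for $H\le K$, $g\in G$, $I^g=g^{-1}Ig$: $\mathrm{res}^K_H(b)_L=b_L$; $\mathrm{tr}^K_H(a)_I=\sum_{kH\in K/H,\ I^k\le H}a_{I^k}$; $\mathrm{nm}^K_H(a)_I=\prod_{IgH\in I\backslash K/H}a_{I^g\cap H}$; $c_{g,H}(a)_J=a_{J^g}$ for $J\le gHg^{-1}$. A Tambara ideal is a collection of ideals $\mathcal{I}(G/H)$ closed under all restrictions, transfers, norms and conjugations; it is prime (Nakaoka) if it is not everything and whenever $a\in T(G/K_1)$, $b\in T(G/K_2)$ satisfy $\big(\mathrm{nm}^L_{g_1H_1g_1^{-1}}c_{g_1,H_1}\mathrm{res}^{K_1}_{H_1}(a)\big)\big(\mathrm{nm}^L_{g_2H_2g_2^{-1}}c_{g_2,H_2}\mathrm{res}^{K_2}_{H_2}(b)\big)\in\mathcal{I}(G/L)$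 for all $L,H_1,H_2\le G$, $g_1,g_2\in G$ with $H_i\le K_i$, $g_iH_ig_i^{-1}\le L$, then $a\in\mathcal{I}(G/K_1)$ or $b\in\mathcal{I}(G/K_2)$. *)

theory Defs
  imports "HOL-Algebra.Coset" "HOL-Computational_Algebra.Primes"
begin

text \<open>An element of the ghost ring Atilde(H) is represented as a function from subsets
  of the carrier to int, vanishing outside the subgroups of H, and invariant under
  H-conjugation.\<close>

definition conjg :: "('a, 'b) monoid_scheme \<Rightarrow> 'a \<Rightarrow> 'a set \<Rightarrow> 'a set" where
  "conjg G g I = (\<lambda>x. g \<otimes>\<^bsub>G\<^esub> x \<otimes>\<^bsub>G\<^esub> inv\<^bsub>G\<^esub> g) ` I"
  \<comment> \<open>g I g^-1 ;  I^g = g^-1 I g = conjg G (inv g) I\<close>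

definition sub_le :: "('a, 'b) monoid_scheme \<Rightarrow> 'a set \<Rightarrow> 'a set \<Rightarrow> bool" where
  "sub_le G I H \<longleftrightarrow> subgroup I G \<and> I \<subseteq> H"

definition ghost :: "('a, 'b) monoid_scheme \<Rightarrow> 'a set \<Rightarrow> ('a set \<Rightarrow> int) set" where
  "ghost G H = {a. (\<forall>I. a I \<noteq> 0 \<longrightarrow> sub_le G I H) \<and>
      (\<forall>I h. sub_le G I H \<and> h \<in> H \<longrightarrow> a (conjg G h I) = a I)}"

definition ghost_ideal :: "('a, 'b) monoid_scheme \<Rightarrow> 'a set \<Rightarrow> ('a set \<Rightarrow> int) set \<Rightarrow> bool" where
  "ghost_ideal G H J \<longleftrightarrow> J \<subseteq> ghost G H \<and> (\<lambda>_. 0) \<in> J \<and>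
     (\<forall>a\<in>J. \<forall>b\<in>J. (\<lambda>I. a I + b I) \<in> J) \<and> (\<forall>a\<in>J. (\<lambda>I. - a I) \<in> J) \<and>
     (\<forall>r\<in>ghost G H. \<forall>a\<in>J. (\<lambda>I. r I * a I) \<in> J)"

definition gres :: "('a, 'b) monoid_scheme \<Rightarrow> 'a set \<Rightarrow> 'a set \<Rightarrow> ('a set \<Rightarrow> int) \<Rightarrow> ('a set \<Rightarrow> int)" where
  "gres G K H b = (\<lambda>L. if sub_le G L H then b L else 0)"

definition gtr :: "('a, 'b) monoid_scheme \<Rightarrow> 'a set \<Rightarrow> 'a set \<Rightarrow> ('a set \<Rightarrow> int) \<Rightarrow> ('a set \<Rightarrow> int)" where
  "gtr G K H a = (\<lambda>I. if sub_le G I K then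
      (\<Sum>C\<in>(\<lambda>k. k <#\<^bsub>G\<^esub> H) ` K.
         let k = (SOME k. k \<in> C) in
         if conjg G (inv\<^bsub>G\<^esub> k) I \<subseteq> H then a (conjg G (inv\<^bsub>G\<^esub> k) I) else 0)
     else 0)"

definition dcoset :: "('a, 'b) monoid_scheme \<Rightarrow> 'a set \<Rightarrow> 'a \<Rightarrow> 'a set \<Rightarrow> 'a set" where
  "dcoset G I g H = {i \<otimes>\<^bsub>G\<^esub> g \<otimes>\<^bsub>G\<^esub> h | i h. i \<in> I \<and> h \<in> H}"

definition gnm :: "('a, 'b) monoid_scheme \<Rightarrow> 'a set \<Rightarrow> 'a set \<Rightarrow> ('a set \<Rightarrow> int) \<Rightarrow> ('a set \<Rightarrow> int)" where
  "gnm G K H a = (\<lambda>I. if sub_le G I K then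
      (\<Prod>D\<in>(\<lambda>g. dcoset G I g H) ` K.
         let g = (SOME g. g \<in> D) in a (conjg G (inv\<^bsub>G\<^esub> g) I \<inter> H))
     else 0)"

definition gcj :: "('a, 'b) monoid_scheme \<Rightarrow> 'a \<Rightarrow> 'a set \<Rightarrow> ('a set \<Rightarrow> int) \<Rightarrow> ('a set \<Rightarrow> int)" where
  "gcj G g H a = (\<lambda>J. if sub_le G J (conjg G g H) then a (conjg G (inv\<^bsub>G\<^esub> g) J) else 0)"

text \<open>A Tambara ideal of Gh(A_G): an ideal of Atilde(H) for each subgroup H (level G/H),
  closed under restrictions, transfers, norms and conjugations.\<close>
definition tambara_ideal :: "('a, 'b) monoid_scheme \<Rightarrow> ('a set \<Rightarrow> ('a set \<Rightarrow> int) set) \<Rightarrow> bool" where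
  "tambara_ideal G J \<longleftrightarrow>
     (\<forall>H. subgroup H G \<longrightarrow> ghost_ideal G H (J H)) \<and>
     (\<forall>K H b. subgroup K G \<and> sub_le G H K \<and> b \<in> J K \<longrightarrow> gres G K H b \<in> J H) \<and>
     (\<forall>K H a. subgroup K G \<and> sub_le G H K \<and> a \<in> J H \<longrightarrow> gtr G K H a \<in> J K) \<and>
     (\<forall>K H a. subgroup K G \<and> sub_le G H K \<and> a \<in> J H \<longrightarrow> gnm G K H a \<in> J K) \<and>
     (\<forall>g H a. g \<in> carrier G \<and> subgroup H G \<and> a \<in> J H \<longrightarrow> gcj G g H a \<in> J (conjg G g H))"

text \<open>Prime Tambara ideal in the sense of Nakaoka.\<close>
definition prime_tambara_ideal :: "('a, 'b) monoid_scheme \<Rightarrow> ('a set \<Rightarrow> ('a set \<Rightarrow> int) set) \<Rightarrow> bool" where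
  "prime_tambara_ideal G P \<longleftrightarrow> tambara_ideal G P \<and>
     (\<exists>H. subgroup H G \<and> P H \<noteq> ghost G H) \<and>
     (\<forall>K1 K2 a b. subgroup K1 G \<and> subgroup K2 G \<and> a \<in> ghost G K1 \<and> b \<in> ghost G K2 \<and>
        (\<forall>L H1 H2 g1 g2. subgroup L G \<and> sub_le G H1 K1 \<and> sub_le G H2 K2 \<and>
            g1 \<in> carrier G \<and> g2 \<in> carrier G \<and>
            conjg G g1 H1 \<subseteq> L \<and> conjg G g2 H2 \<subseteq> L \<longrightarrow>
            (\<lambda>I. gnm G L (conjg G g1 H1) (gcj G g1 H1 (gres G K1 H1 a)) I *
                 gnm G L (conjg G g2 H2) (gcj G g2 H2 (gres G K2 H2 b)) I) \<in> P L)
        \<longrightarrow> a \<in> P K1 \<or> b \<in> P K2)"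

definition pcoord :: "('a, 'b) monoid_scheme \<Rightarrow> ('a set \<Rightarrow> ('a set \<Rightarrow> int) set) \<Rightarrow> 'a set \<Rightarrow> nat" where
  "pcoord G P I = (THE n. (\<lambda>a. a I) ` P (carrier G) = {x. int n dvd x})"

definition subgroup_family :: "('a, 'b) monoid_scheme \<Rightarrow> 'a set set \<Rightarrow> bool" where
  "subgroup_family G F \<longleftrightarrow> F \<noteq> {} \<and> (\<forall>I\<in>F. subgroup I G) \<and>
     (\<forall>I\<in>F. \<forall>g\<in>carrier G. conjg G g I \<in> F) \<and>
     (\<forall>I\<in>F. \<forall>J. sub_le G J I \<longrightarrow> J \<in> F)"

end

theory Submission
  imports Defs "HOL-Algebra.Group_Action"
begin

text \<open>Ghost coordinates are conjugation invariant, so p_I depends only on the conjugacy class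
  of I, and p_e = 1 would put a unit into P(G/e) = (p) after restriction. For closure under
  subgroups, take a in P(G/G) with a_J = 1 for some J \<le> I, restrict it to J and norm it up to
  the normaliser N of I: at I every double coset in N contributes the factor a_J = 1. Cutting
  down to the coordinate I with its indicator and transferring to G gives an element of
  P(G/G) with I-coordinate 1, since only the coset N itself contributes at I. Thus p_J = 1
  forces p_I = 1.\<close>

context group begin

lemma conjg_eq_cosets: "conjg G g I = g <#\<^bsub>G\<^esub> I #> inv g"
  unfolding conjg_def l_coset_def r_coset_def by auto

lemma subgroup_conjg:
  assumes "subgroup I G" "g \<in> carrier G"
  shows "subgroup (conjg G g I) G"
  using group_action.element_image[OF action_by_conjugation_on_subgroups_set assms(2), of I] assms(1)
  by (simp add: conjg_eq_cosets)

lemma conjg_inj: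
  assumes "g \<in> carrier G" "I \<subseteq> carrier G" "L \<subseteq> carrier G"
  shows "conjg G g L = conjg G g I \<longleftrightarrow> L = I"
  using inj_onD[OF group_action.inj_prop[OF action_by_conjugation_on_power_set assms(1)], of L I] assms
  by (auto simp: conjg_eq_cosets)

lemma mem_normalizer_iff:
  assumes "I \<subseteq> carrier G"
  shows "g \<in> normalizer G I \<longleftrightarrow> g \<in> carrier G \<and> conjg G g I = I"
  using assms by (simp add: normalizer_def stabilizer_def conjg_eq_cosets)

lemma subgroup_subset_normalizer:
  assumes "subgroup I G"
  shows "I \<subseteq> normalizer G I"
proof
  fix i assume i: "i \<in> I"
  then have "i <#\<^bsub>G\<^esub> I #> inv i = I"
    using assms subgroup.mem_carrier coset_join3 subgroup.rcos_const subgroup.m_inv_closed is_group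
    by metis
  then show "i \<in> normalizer G I"
    using assms i by (simp add: mem_normalizer_iff conjg_eq_cosets subgroup.subset subgroup.mem_carrier)
qed

lemma conjg_inv_normalizer:
  assumes "subgroup I G" "g \<in> normalizer G I"
  shows "conjg G (inv g) I = I"
  using assms subgroup.m_inv_closed[OF normalizer_imp_subgroup]
  by (simp add: mem_normalizer_iff subgroup.subset)

lemma indicator_in_ghost_normalizer:
  assumes "subgroup I G"
  shows "(\<lambda>L. if L = I then c else 0) \<in> ghost G (normalizer G I)"
  unfolding ghost_def
proof (intro CollectI conjI allI impI)
  fix L assume "(if L = I then c else 0) \<noteq> 0"
  then show "sub_le G L (normalizer G I)"
    using assms subgroup_subset_normalizer by (auto simp: sub_le_def split: if_splits)
next
  fix L h assume "sub_le G L (normalizer G I) \<and> h \<in> normalizer G I"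
  then have "h \<in> carrier G" "conjg G h I = I" "L \<subseteq> carrier G"
    using assms by (auto simp: sub_le_def mem_normalizer_iff subgroup.subset)
  then show "(if conjg G h L = I then c else 0) = (if L = I then c else 0)"
    using conjg_inj[of h I L] assms by (simp add: subgroup.subset)
qed

lemma gnm_normalizer_eq_one:
  assumes I: "subgroup I G" and J: "subgroup J G" "J \<subseteq> I" and "b J = 1"
  shows "gnm G (normalizer G I) J b I = 1"
proof -
  let ?N = "normalizer G I"
  have N: "subgroup ?N G" using I by (simp add: normalizer_imp_subgroup subgroup.subset)
  have IN: "I \<subseteq> ?N" using I by (rule subgroup_subset_normalizer)
  have "b (conjg G (inv (SOME g. g \<in> D)) I \<inter> J) = 1" if D: "D \<in> (\<lambda>g. dcoset G I g J) ` ?N" for D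
  proof -
    obtain g0 where g0: "g0 \<in> ?N" and D: "D = dcoset G I g0 J" using D by blast
    have "g0 \<in> carrier G" using g0 N subgroup.subset by blast
    then have "g0 \<in> D" unfolding D dcoset_def
      using subgroup.one_closed[OF I] subgroup.one_closed[OF J(1)] by force
    then have "(SOME g. g \<in> D) \<in> D" by (rule someI)
    moreover have "D \<subseteq> ?N" unfolding D dcoset_def
      using g0 IN J(2) subgroup.m_closed[OF N] by blast
    ultimately have "conjg G (inv (SOME g. g \<in> D)) I = I"
      using conjg_inv_normalizer[OF I] by blast
    then show ?thesis using J(2) \<open>b J = 1\<close> by (simp add: Int_absorb1)
  qed
  moreover have "sub_le G I ?N" using I IN by (simp add: sub_le_def)
  ultimately show ?thesis unfolding gnm_def Let_def by (simp add: prod.neutral)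
qed

lemma gtr_normalizer_indicator:
  assumes fin: "finite (carrier G)" and I: "subgroup I G"
  shows "gtr G (carrier G) (normalizer G I) (\<lambda>L. if L = I then c else 0) I = c"
proof -
  let ?N = "normalizer G I"
  have N: "subgroup ?N G" using I by (simp add: normalizer_imp_subgroup subgroup.subset)
  have NN: "\<one> <#\<^bsub>G\<^esub> ?N = ?N" using lcos_mult_one subgroup.subset[OF N] by blast
  have IN: "I \<subseteq> ?N" using I by (rule subgroup_subset_normalizer)
  have summand: "(if conjg G (inv (SOME k. k \<in> C)) I \<subseteq> ?N
      then if conjg G (inv (SOME k. k \<in> C)) I = I then c else 0 else 0) = (if C = ?N then c else 0)"
    if C: "C \<in> (\<lambda>k. k <#\<^bsub>G\<^esub> ?N) ` carrier G" for C
  proof -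
    obtain k0 where k0: "k0 \<in> carrier G" and C: "C = k0 <#\<^bsub>G\<^esub> ?N" using C by blast
    have "k0 \<in> C" unfolding C l_coset_def using subgroup.one_closed[OF N] k0 by force
    then have "(SOME k. k \<in> C) \<in> C" by (rule someI)
    then obtain k where kC: "k \<in> C" and k: "k = (SOME k. k \<in> C)" by blast
    have kc: "k \<in> carrier G" using l_coset_carrier[OF kC[unfolded C] k0 N] .
    have Ck: "C = k <#\<^bsub>G\<^esub> ?N" using l_repr_independence[OF kC[unfolded C] k0 N] C by simp
    have "conjg G (inv k) I = I \<longleftrightarrow> k \<in> ?N"
      using kc I subgroup.m_inv_closed[OF N] conjg_inv_normalizer[OF I]
      by (metis inv_closed inv_inv mem_normalizer_iff subgroup.subset)
    also have "\<dots> \<longleftrightarrow> C = ?N"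
      using kC Ck NN kc l_repr_independence[OF _ one_closed N] coset_join3[OF kc N] by metis
    finally show ?thesis using k IN by auto
  qed
  have Nin: "?N \<in> (\<lambda>k. k <#\<^bsub>G\<^esub> ?N) ` carrier G" using NN by force
  have "sub_le G I (carrier G)" using I by (simp add: sub_le_def subgroup.subset)
  then have "gtr G (carrier G) ?N (\<lambda>L. if L = I then c else 0) I
      = (\<Sum>C\<in>(\<lambda>k. k <#\<^bsub>G\<^esub> ?N) ` carrier G. if C = ?N then c else 0)"
    unfolding gtr_def Let_def by (simp add: summand cong: sum.cong)
  also have "\<dots> = c" using fin Nin by simp
  finally show ?thesis .
qed

end

lemma tambara_ideal_ghost_ideal: "tambara_ideal G P \<Longrightarrow> subgroup H G \<Longrightarrow> ghost_ideal G H (P H)"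
  unfolding tambara_ideal_def by blast

lemma tambara_ideal_subset_ghost: "tambara_ideal G P \<Longrightarrow> subgroup H G \<Longrightarrow> P H \<subseteq> ghost G H"
  using tambara_ideal_ghost_ideal unfolding ghost_ideal_def by blast

lemma tambara_ideal_mult:
  "tambara_ideal G P \<Longrightarrow> subgroup H G \<Longrightarrow> r \<in> ghost G H \<Longrightarrow> a \<in> P H \<Longrightarrow> (\<lambda>I. r I * a I) \<in> P H"
  using tambara_ideal_ghost_ideal unfolding ghost_ideal_def by blast

lemma tambara_ideal_gres:
  "tambara_ideal G P \<Longrightarrow> subgroup K G \<Longrightarrow> sub_le G H K \<Longrightarrow> b \<in> P K \<Longrightarrow> gres G K H b \<in> P H"
  unfolding tambara_ideal_def by blast

lemma tambara_ideal_gtr: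
  "tambara_ideal G P \<Longrightarrow> subgroup K G \<Longrightarrow> sub_le G H K \<Longrightarrow> a \<in> P H \<Longrightarrow> gtr G K H a \<in> P K"
  unfolding tambara_ideal_def by blast

lemma tambara_ideal_gnm:
  "tambara_ideal G P \<Longrightarrow> subgroup K G \<Longrightarrow> sub_le G H K \<Longrightarrow> a \<in> P H \<Longrightarrow> gnm G K H a \<in> P K"
  unfolding tambara_ideal_def by blast

lemma ghost_conjg_eq: "a \<in> ghost G H \<Longrightarrow> sub_le G I H \<Longrightarrow> h \<in> H \<Longrightarrow> a (conjg G h I) = a I"
  unfolding ghost_def by blast

lemma (in group) tambara_ideal_coordinate_one_supergroup:
  assumes fin: "finite (carrier G)" and P: "tambara_ideal G P"
    and I: "subgroup I G" and J: "sub_le G J I"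
    and a: "a \<in> P (carrier G)" "a J = 1"
  shows "\<exists>z \<in> P (carrier G). z I = 1"
proof -
  let ?N = "normalizer G I" and ?\<delta> = "\<lambda>L. if L = I then 1 else 0 :: int"
  have N: "subgroup ?N G" using I by (simp add: normalizer_imp_subgroup subgroup.subset)
  have J': "subgroup J G" "J \<subseteq> I" "J \<subseteq> ?N"
    using J subgroup_subset_normalizer[OF I] by (auto simp: sub_le_def)
  have sub_le_G: "sub_le G H (carrier G)" if "subgroup H G" for H
    using that by (simp add: sub_le_def subgroup.subset)
  define b where "b = gres G (carrier G) J a"
  have b: "b \<in> P J" "b J = 1"
    unfolding b_def using tambara_ideal_gres[OF P subgroup_self sub_le_G[OF J'(1)] a(1)] J' a(2)
    by (auto simp: gres_def sub_le_def)
  define y where "y = gnm G ?N J b"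
  have y: "y \<in> P ?N" "y I = 1"
    unfolding y_def
    using tambara_ideal_gnm[OF P N _ b(1)] J' gnm_normalizer_eq_one[OF I J'(1,2), of b] b(2)
    by (auto simp: sub_le_def)
  have "?\<delta> = (\<lambda>L. ?\<delta> L * y L)" using y(2) by auto
  then have "?\<delta> \<in> P ?N"
    using tambara_ideal_mult[OF P N indicator_in_ghost_normalizer[OF I] y(1)] by simp
  then have "gtr G (carrier G) ?N ?\<delta> \<in> P (carrier G)"
    using tambara_ideal_gtr[OF P subgroup_self sub_le_G[OF N]] by blast
  moreover have "gtr G (carrier G) ?N ?\<delta> I = 1" using gtr_normalizer_indicator[OF fin I] .
  ultimately show ?thesis by blast
qed

lemma (in group) pcoord_conjg:
  assumes P: "tambara_ideal G P" and I: "subgroup I G" and g: "g \<in> carrier G"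
  shows "pcoord G P (conjg G g I) = pcoord G P I"
proof -
  have "a (conjg G g I) = a I" if "a \<in> P (carrier G)" for a
    using tambara_ideal_subset_ghost[OF P subgroup_self] that I g
    by (intro ghost_conjg_eq[of a G "carrier G"]) (auto simp: sub_le_def subgroup.subset)
  then have "(\<lambda>a. a (conjg G g I)) ` P (carrier G) = (\<lambda>a. a I) ` P (carrier G)"
    by (rule image_cong[OF refl])
  then show ?thesis unfolding pcoord_def by simp
qed

lemma (in group) pcoord_eq_one_iff:
  assumes P: "tambara_ideal G P"
    and coord: "P (carrier G) = {a \<in> ghost G (carrier G).
                                 \<forall>I. subgroup I G \<longrightarrow> int (pcoord G P I) dvd a I}"
    and I: "subgroup I G"
  shows "pcoord G P I = 1 \<longleftrightarrow> (\<exists>a \<in> P (carrier G). a I = 1)"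
proof
  assume "\<exists>a \<in> P (carrier G). a I = 1"
  then have "int (pcoord G P I) dvd 1" using coord I by force
  then show "pcoord G P I = 1" by simp
next
  assume "pcoord G P I = 1"
  define A where "A = (\<lambda>L. if subgroup L G \<and> pcoord G P L = 1 then 1 else 0 :: int)"
  have "A \<in> ghost G (carrier G)"
    unfolding ghost_def A_def using pcoord_conjg[OF P] subgroup_conjg
    by (auto simp: sub_le_def subgroup.subset)
  then have "A \<in> P (carrier G)" unfolding coord by (simp add: A_def)
  moreover have "A I = 1" using I \<open>pcoord G P I = 1\<close> by (simp add: A_def)
  ultimately show "\<exists>a \<in> P (carrier G). a I = 1" by blast
qed

theorem lemma4p9:
  fixes G :: "('a, 'b) monoid_scheme" and P :: "'a set \<Rightarrow> ('a set \<Rightarrow> int) set" and p :: nat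
  assumes "group G" and "finite (carrier G)"
    and "prime_tambara_ideal G P"
    and "prime p \<or> p = 0"
    and "P {\<one>\<^bsub>G\<^esub>} = {a \<in> ghost G {\<one>\<^bsub>G\<^esub>}. int p dvd a {\<one>\<^bsub>G\<^esub>}}"
    and "P (carrier G) = {a \<in> ghost G (carrier G).
                          \<forall>I. subgroup I G \<longrightarrow> int (pcoord G P I) dvd a I}"
  shows "subgroup_family G {I. subgroup I G \<and> pcoord G P I \<noteq> 1}"
proof -
  interpret group G by fact
  have P: "tambara_ideal G P" using assms(3) unfolding prime_tambara_ideal_def by blast
  note one_iff = pcoord_eq_one_iff[OF P assms(6)]
  have "pcoord G P {\<one>\<^bsub>G\<^esub>} \<noteq> 1"
  proof
    assume "pcoord G P {\<one>\<^bsub>G\<^esub>} = 1"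
    then obtain a where "a \<in> P (carrier G)" "a {\<one>\<^bsub>G\<^esub>} = 1"
      using one_iff triv_subgroup by blast
    then have "gres G (carrier G) {\<one>\<^bsub>G\<^esub>} a \<in> P {\<one>\<^bsub>G\<^esub>}"
        "gres G (carrier G) {\<one>\<^bsub>G\<^esub>} a {\<one>\<^bsub>G\<^esub>} = 1"
      using tambara_ideal_gres[OF P subgroup_self] triv_subgroup by (auto simp: sub_le_def gres_def)
    then have "int p dvd 1" using assms(5) by force
    with assms(4) show False by auto
  qed
  moreover have "pcoord G P I = 1" if "sub_le G J I" "subgroup I G" "pcoord G P J = 1" for I J
    using that one_iff tambara_ideal_coordinate_one_supergroup[OF assms(2) P]
    by (metis sub_le_def)
  ultimately show ?thesis
    unfolding subgroup_family_def using triv_subgroup pcoord_conjg[OF P] subgroup_conjg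
    by (auto simp: sub_le_def)
qed

end
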